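(* Let $T$ be a tree and $u\in V(T)$ a vertex with $d_T(u)\ge 3$ that is adjacent to a leaf $v$ of $T$. Let $T'$ be any tree obtained by smoothing $u$ in $T-v$. Then $b(T)\le b(T')+1$; more precisely, $T$ has a burning sequence of length at most $b(T')+1$ whose first term is $v$.
   Context: All graphs are finite and simple. $T-v$ is the tree obtained by deleting $v$ and its incident edge. Smoothing: let $S$ be a tree and $w\in V(S)$ with $N_S(w)=\{w_1,\dots,w_q\}$, $q\ge 2$, and suppose exactly $p$ of these neighbours are leaves of $S$, labelled $w_1,\dots,w_p$ (if $p>0$); the remaining neighbours are labelled arbitrarily. A tree obtained by smoothing $w$ in $S$ is formed from $S$ by deleting $w$ (and its incident edges) and then: if $p\le 2$, adding the edges of the path $w_1w_3w_4\cdots w_qw_2$; if $p\ge 3$, additionally deleting $w_3,\dots,w_p$ and adding the edges of the path $w_1w_{p+1}w_{p+2}\cdots w_qw_2$. Burning process of a connected graph $G$: initially all vertices are unburned. In each round $r\ge 1$, one vertex $x_r$ that is unburned at the end of round $r-1$ is chosen as the source of round $r$; in round $r$ the source $x_r$ becomes burned, and so does every vertex that was unburned at the end of round $r-1$ and is adjacent to a vertex burned at the end of round $r-1$. Burned vertices stay burned. If all vertices are burned at the end of round $k$ (and not earlier), $(x_1,\dots,x_k)$ is called a burning sequence for $G$ of length $k$. The burning number $b(G)$ is the minimum length of a burning sequence for $G$. *)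

theory Defs
  imports Main
begin

type_synonym 'a graph = "'a set \<times> 'a set set"

definition verts :: "'a graph \<Rightarrow> 'a set" where "verts G = fst G"
definition edges :: "'a graph \<Rightarrow> 'a set set" where "edges G = snd G"

definition graph :: "'a graph \<Rightarrow> bool" where
  "graph G \<longleftrightarrow> finite (verts G) \<and>
     (\<forall>e\<in>edges G. \<exists>x y. x \<noteq> y \<and> e = {x, y} \<and> x \<in> verts G \<and> y \<in> verts G)"

definition adj :: "'a graph \<Rightarrow> 'a \<Rightarrow> 'a \<Rightarrow> bool" where
  "adj G x y \<longleftrightarrow> x \<noteq> y \<and> {x, y} \<in> edges G"

definition nbrs :: "'a graph \<Rightarrow> 'a \<Rightarrow> 'a set" where
  "nbrs G x = {y. adj G x y}"

definition degree :: "'a graph \<Rightarrow> 'a \<Rightarrow> nat" where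
  "degree G x = card (nbrs G x)"

definition leaf :: "'a graph \<Rightarrow> 'a \<Rightarrow> bool" where
  "leaf G x \<longleftrightarrow> x \<in> verts G \<and> degree G x = 1"

definition walk :: "'a graph \<Rightarrow> 'a list \<Rightarrow> bool" where
  "walk G xs \<longleftrightarrow> xs \<noteq> [] \<and> set xs \<subseteq> verts G \<and>
     (\<forall>i. Suc i < length xs \<longrightarrow> adj G (xs ! i) (xs ! Suc i))"

definition connected :: "'a graph \<Rightarrow> bool" where
  "connected G \<longleftrightarrow> verts G \<noteq> {} \<and>
     (\<forall>x\<in>verts G. \<forall>y\<in>verts G. \<exists>xs. walk G xs \<and> hd xs = x \<and> last xs = y)"

definition cycle :: "'a graph \<Rightarrow> 'a list \<Rightarrow> bool" where
  "cycle G xs \<longleftrightarrow> length xs \<ge> 3 \<and> distinct xs \<and> walk G xs \<and> adj G (last xs) (hd xs)"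

definition tree :: "'a graph \<Rightarrow> bool" where
  "tree G \<longleftrightarrow> graph G \<and> connected G \<and> \<not> (\<exists>xs. cycle G xs)"

definition del_vert :: "'a graph \<Rightarrow> 'a \<Rightarrow> 'a graph" where
  "del_vert G v = (verts G - {v}, {e\<in>edges G. v \<notin> e})"

definition path_edges :: "'a list \<Rightarrow> 'a set set" where
  "path_edges P = {{P ! i, P ! Suc i} | i. Suc i < length P}"

text \<open>The list ws = [w1,...,wq] enumerates N_S(w),
  the first p entries being exactly the leaf neighbours. Deleted vertices: w and w3..wp
  (empty range if p \<le> 2). Added path: w1 w_{max 3 (p+1)} ... wq w2.\<close>
definition smoothing :: "'a graph \<Rightarrow> 'a \<Rightarrow> 'a graph \<Rightarrow> bool" where
  "smoothing S w S' \<longleftrightarrow> w \<in> verts S \<and>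
     (\<exists>ws p. distinct ws \<and> set ws = nbrs S w \<and> length ws \<ge> 2 \<and>
        p = card {x \<in> nbrs S w. leaf S x} \<and>
        (\<forall>i<length ws. i < p \<longleftrightarrow> leaf S (ws ! i)) \<and>
        (let D = {w} \<union> set (drop 2 (take p ws));
             P = ws ! 0 # drop (max 2 p) ws @ [ws ! 1]
         in S' = (verts S - D, {e\<in>edges S. e \<inter> D = {}} \<union> path_edges P)))"

text \<open>Burning process: burned G xs r = set of vertices burned at the end of round r.\<close>
fun burned :: "'a graph \<Rightarrow> 'a list \<Rightarrow> nat \<Rightarrow> 'a set" where
  "burned G xs 0 = {}"
| "burned G xs (Suc r) = burned G xs r \<union> {xs ! r} \<union>
      {y \<in> verts G. \<exists>z\<in>burned G xs r. adj G z y}"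

definition burning_seq :: "'a graph \<Rightarrow> 'a list \<Rightarrow> bool" where
  "burning_seq G xs \<longleftrightarrow>
     (\<forall>r<length xs. xs ! r \<in> verts G \<and> xs ! r \<notin> burned G xs r) \<and>
     burned G xs (length xs) = verts G \<and>
     (\<forall>r<length xs. burned G xs r \<noteq> verts G)"

definition burning_number :: "'a graph \<Rightarrow> nat" where
  "burning_number G = (LEAST k. \<exists>xs. burning_seq G xs \<and> length xs = k)"

end

theory Submission
  imports Defs
begin

text \<open>Let k = b(T') and let xs be an optimal burning sequence of T'. Run v # xs on T: the fire
  lit at v reaches u in round 2 and all of N(u) in round 3. Every vertex of T missing from T' is
  v, u or in N(u), and every edge of T' is either an edge of T or lies on the new path, whose
  vertices all belong to N(u); hence whatever xs burns in T' by round r is burned in T by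
  round r + 1, and since k \<ge> 2 the sequence v # xs covers T after k + 1 rounds. Dropping
  sources that are already burned, and stopping once everything burns, turns any covering list
  into a burning sequence that is no longer and has the same first term.\<close>

lemma adj_sym: "adj G x y \<longleftrightarrow> adj G y x"
  unfolding adj_def by (auto simp: insert_commute)

lemma adj_in_verts:
  assumes "graph G" "adj G x y"
  shows "x \<in> verts G" "y \<in> verts G"
proof -
  obtain a b where "{x, y} = {a, b}" "a \<in> verts G" "b \<in> verts G"
    using assms unfolding graph_def adj_def by blast
  then show "x \<in> verts G" "y \<in> verts G" by (auto simp: doubleton_eq_iff)
qed

lemma verts_del_vert: "verts (del_vert G v) = verts G - {v}"
  by (simp add: del_vert_def verts_def)

lemma edges_del_vert: "edges (del_vert G v) = {e \<in> edges G. v \<notin> e}"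
  by (simp add: del_vert_def edges_def)

lemma adj_del_vert: "adj (del_vert G v) x y \<longleftrightarrow> adj G x y \<and> x \<noteq> v \<and> y \<noteq> v"
  by (auto simp: adj_def edges_del_vert)

lemma graph_del_vert: "graph G \<Longrightarrow> graph (del_vert G v)"
  unfolding graph_def verts_del_vert edges_del_vert by blast

lemma path_edges_subset: "e \<in> path_edges P \<Longrightarrow> e \<subseteq> set P"
  unfolding path_edges_def by (auto intro: nth_mem)

context
  fixes S S' :: "'a graph" and w :: 'a
  assumes smooth: "smoothing S w S'"
begin

text \<open>In the notation of the definition, a = w1, b = w2, and \<open>take p rest\<close> are the deleted
  leaves w3, ..., w(p+2); the index p is shifted by 2 against the definition.\<close>

lemma smoothingE:
  obtains a b rest p where "distinct (a # b # rest)" "set (a # b # rest) = nbrs S w"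
    "verts S' = verts S - insert w (set (take p rest))"
    "edges S' = {e\<in>edges S. e \<inter> insert w (set (take p rest)) = {}}
                \<union> path_edges (a # drop p rest @ [b])"
proof -
  obtain ws p where ws: "distinct ws" "set ws = nbrs S w" "2 \<le> length ws"
    and S': "S' = (verts S - ({w} \<union> set (drop 2 (take p ws))),
                   {e\<in>edges S. e \<inter> ({w} \<union> set (drop 2 (take p ws))) = {}}
                     \<union> path_edges (ws ! 0 # drop (max 2 p) ws @ [ws ! 1]))"
    using smooth unfolding smoothing_def Let_def by blast
  obtain a b rest where ab: "ws = a # b # rest"
    using ws(3) by (cases ws; cases "tl ws") auto
  have "drop 2 (take p ws) = take (p - 2) rest"
    using ab by (simp add: drop_take)
  moreover have "drop (max 2 p) ws = drop (p - 2) rest"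
  proof -
    have "max 2 p = (p - 2) + 2" by simp
    then show ?thesis using ab by (simp only: drop_drop[symmetric]) simp
  qed
  ultimately show thesis
    using that[of a b rest "p - 2"] ws ab S' by (simp add: verts_def edges_def)
qed

lemma smoothing_verts: "verts S' \<subseteq> verts S" "verts S \<subseteq> verts S' \<union> insert w (nbrs S w)"
proof -
  obtain a b rest p where "set (a # b # rest) = nbrs S w"
    "verts S' = verts S - insert w (set (take p rest))"
    by (rule smoothingE) blast
  then show "verts S' \<subseteq> verts S" "verts S \<subseteq> verts S' \<union> insert w (nbrs S w)"
    by (auto dest: in_set_takeD)
qed

lemma smoothing_adj: "adj S' z y \<Longrightarrow> adj S z y \<or> y \<in> nbrs S w"
proof -
  assume zy: "adj S' z y"
  obtain a b rest p D where nbrs: "set (a # b # rest) = nbrs S w"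
    and edges: "edges S' = {e\<in>edges S. e \<inter> D = {}} \<union> path_edges (a # drop p rest @ [b])"
    by (rule smoothingE) blast
  have "set (a # drop p rest @ [b]) \<subseteq> nbrs S w"
    using nbrs set_drop_subset[of p rest] by auto
  with zy edges path_edges_subset show ?thesis
    unfolding adj_def by blast
qed

lemma smoothing_two_verts:
  assumes "graph S"
  shows "\<exists>a b. a \<in> verts S' \<and> b \<in> verts S' \<and> a \<noteq> b"
proof -
  obtain a b rest p where ab: "distinct (a # b # rest)" "set (a # b # rest) = nbrs S w"
    and verts: "verts S' = verts S - insert w (set (take p rest))"
    by (rule smoothingE) blast
  then have "adj S w a" "adj S w b"
    unfolding nbrs_def by auto
  then have "a \<in> verts S - {w}" "b \<in> verts S - {w}"
    using adj_in_verts[OF assms] unfolding adj_def by auto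
  with ab(1) verts show ?thesis
    by (auto dest: in_set_takeD)
qed

end

lemma smoothing_del_vert:
  assumes "graph T" "smoothing (del_vert T v) u T'"
  shows "verts T' \<subseteq> verts T" "verts T \<subseteq> verts T' \<union> {v, u} \<union> nbrs T u"
    and "\<And>z y. adj T' z y \<Longrightarrow> adj T z y \<or> y \<in> nbrs T u"
    and "\<exists>a b. a \<in> verts T' \<and> b \<in> verts T' \<and> a \<noteq> b"
proof -
  have nbrs: "nbrs (del_vert T v) u \<subseteq> nbrs T u"
    unfolding nbrs_def by (auto simp: adj_del_vert)
  show "verts T' \<subseteq> verts T" "verts T \<subseteq> verts T' \<union> {v, u} \<union> nbrs T u"
    using smoothing_verts[OF assms(2)] nbrs by (auto simp: verts_del_vert)
  show "adj T' z y \<Longrightarrow> adj T z y \<or> y \<in> nbrs T u" for z y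
    using smoothing_adj[OF assms(2)] nbrs by (auto simp: adj_del_vert)
  show "\<exists>a b. a \<in> verts T' \<and> b \<in> verts T' \<and> a \<noteq> b"
    using smoothing_two_verts[OF assms(2) graph_del_vert[OF assms(1)]] .
qed

definition burn_step :: "'a graph \<Rightarrow> 'a set \<Rightarrow> 'a \<Rightarrow> 'a set" where
  "burn_step G B x = B \<union> {x} \<union> {y \<in> verts G. \<exists>z\<in>B. adj G z y}"

fun burn_from :: "'a graph \<Rightarrow> 'a set \<Rightarrow> 'a list \<Rightarrow> 'a set" where
  "burn_from G B [] = B"
| "burn_from G B (x # xs) = burn_from G (burn_step G B x) xs"

fun burning_seq_from :: "'a graph \<Rightarrow> 'a set \<Rightarrow> 'a list \<Rightarrow> bool" where
  "burning_seq_from G B [] \<longleftrightarrow> B = verts G"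
| "burning_seq_from G B (x # xs) \<longleftrightarrow>
     B \<noteq> verts G \<and> x \<in> verts G \<and> x \<notin> B \<and> burning_seq_from G (burn_step G B x) xs"

lemma burn_from_snoc: "burn_from G B (xs @ [x]) = burn_step G (burn_from G B xs) x"
  by (induction xs arbitrary: B) auto

lemma burned_eq_burn_from: "r \<le> length xs \<Longrightarrow> burned G xs r = burn_from G {} (take r xs)"
proof (induction r)
  case (Suc r)
  then have "take (Suc r) xs = take r xs @ [xs ! r]"
    by (simp add: take_Suc_conv_app_nth)
  with Suc show ?case by (simp add: burn_from_snoc burn_step_def)
qed simp

lemma burning_seq_from_nth:
  "burning_seq_from G B xs \<Longrightarrow> r < length xs \<Longrightarrow>
     xs ! r \<in> verts G \<and> xs ! r \<notin> burn_from G B (take r xs) \<and> burn_from G B (take r xs) \<noteq> verts G"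
  by (induction xs arbitrary: B r) (auto simp: less_Suc_eq_0_disj)

lemma burning_seq_from_complete: "burning_seq_from G B xs \<Longrightarrow> burn_from G B xs = verts G"
  by (induction xs arbitrary: B) auto

lemma burning_seq_if_from_empty: "burning_seq_from G {} xs \<Longrightarrow> burning_seq G xs"
  unfolding burning_seq_def
  by (auto simp: burned_eq_burn_from burning_seq_from_nth burning_seq_from_complete)

lemma burn_from_mono: "B \<subseteq> B' \<Longrightarrow> burn_from G B ys \<subseteq> burn_from G B' ys"
proof (induction ys arbitrary: B B')
  case (Cons y ys)
  then have "burn_step G B y \<subseteq> burn_step G B' y" unfolding burn_step_def by auto
  with Cons.IH show ?case by simp
qed simp

lemma burn_from_sources: "B \<union> set ys \<subseteq> burn_from G B ys"
proof (induction ys arbitrary: B)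
  case (Cons y ys)
  from Cons[of "burn_step G B y"] show ?case by (auto simp: burn_step_def)
qed simp

text \<open>A source that is already burned is replaced by an unburned vertex, which can only help.\<close>

lemma burning_seq_from_cover:
  assumes "B \<subseteq> verts G" "set ys \<subseteq> verts G" "verts G \<subseteq> burn_from G B ys"
  shows "\<exists>xs. burning_seq_from G B xs \<and> length xs \<le> length ys \<and>
          (ys \<noteq> [] \<longrightarrow> hd ys \<notin> B \<longrightarrow> xs \<noteq> [] \<and> hd xs = hd ys)"
  using assms
proof (induction ys arbitrary: B)
  case Nil
  then show ?case by (intro exI[of _ "[]"]) auto
next
  case (Cons y ys)
  show ?case
  proof (cases "B = verts G")
    case True
    with Cons.prems show ?thesis by (intro exI[of _ "[]"]) auto
  next
    case unfinished: False
    have "\<exists>x\<in>verts G - B. burn_step G B y \<subseteq> burn_step G B x \<and> (y \<notin> B \<longrightarrow> x = y)"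
    proof (cases "y \<in> B")
      case True
      obtain x where "x \<in> verts G - B"
        using unfinished Cons.prems(1) by blast
      moreover from True have "burn_step G B y \<subseteq> burn_step G B x"
        unfolding burn_step_def by auto
      ultimately show ?thesis using True by blast
    next
      case False
      with Cons.prems(2) show ?thesis by auto
    qed
    then obtain x where x: "x \<in> verts G - B" "burn_step G B y \<subseteq> burn_step G B x"
      and "y \<notin> B \<longrightarrow> x = y" by blast
    have "verts G \<subseteq> burn_from G (burn_step G B x) ys"
      using Cons.prems(3) burn_from_mono[OF x(2), of G ys] by auto
    moreover have "burn_step G B x \<subseteq> verts G"
      using Cons.prems(1) x unfolding burn_step_def by auto
    ultimately obtain xs where "burning_seq_from G (burn_step G B x) xs" "length xs \<le> length ys"
      using Cons.IH[of "burn_step G B x"] Cons.prems(2) by auto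
    with x \<open>y \<notin> B \<longrightarrow> x = y\<close> unfinished show ?thesis
      by (intro exI[of _ "x # xs"]) auto
  qed
qed

lemma burning_seq_of_cover:
  assumes "set ys \<subseteq> verts G" "verts G \<subseteq> burned G ys (length ys)" "ys \<noteq> []"
  obtains xs where "burning_seq G xs" "length xs \<le> length ys" "xs \<noteq> []" "hd xs = hd ys"
proof -
  have "verts G \<subseteq> burn_from G {} ys"
    using assms(2) by (simp add: burned_eq_burn_from)
  then obtain xs where "burning_seq_from G {} xs" "length xs \<le> length ys" "xs \<noteq> []" "hd xs = hd ys"
    using burning_seq_from_cover[of "{}" G ys] assms(1,3) by auto
  with that show thesis using burning_seq_if_from_empty by blast
qed

lemma burning_seq_exists:
  assumes "finite (verts G)"
  obtains xs where "burning_seq G xs"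
proof -
  obtain ys where ys: "set ys = verts G" using finite_list[OF assms] by blast
  then have "verts G \<subseteq> burn_from G {} ys" using burn_from_sources[of "{}" ys G] by simp
  then obtain xs where "burning_seq_from G {} xs"
    using burning_seq_from_cover[of "{}" G ys] ys by auto
  then show thesis using burning_seq_if_from_empty that by blast
qed

lemma burning_number_attained:
  assumes "finite (verts G)"
  obtains xs where "burning_seq G xs" "length xs = burning_number G"
proof -
  obtain ys where "burning_seq G ys" using burning_seq_exists[OF assms] .
  then have "\<exists>k xs. burning_seq G xs \<and> length xs = k" by blast
  from LeastI_ex[OF this] show thesis
    using that unfolding burning_number_def by blast
qed

lemma burning_number_le: "burning_seq G xs \<Longrightarrow> burning_number G \<le> length xs"
  unfolding burning_number_def by (rule Least_le) blast

lemma burning_seq_burns_all: "burning_seq G xs \<Longrightarrow> burned G xs (length xs) = verts G"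
  unfolding burning_seq_def by simp

lemma burning_seq_in_verts: "burning_seq G xs \<Longrightarrow> set xs \<subseteq> verts G"
  unfolding burning_seq_def by (auto simp: in_set_conv_nth)

lemma burning_seq_length_ge_2:
  assumes "burning_seq G xs" "a \<in> verts G" "b \<in> verts G" "a \<noteq> b"
  shows "2 \<le> length xs"
proof (rule ccontr)
  assume "\<not> 2 \<le> length xs"
  then have "length xs = 0 \<or> length xs = 1" by arith
  then have "burned G xs (length xs) \<subseteq> {xs ! 0}" by auto
  with assms burning_seq_burns_all show False by blast
qed

lemma burned_mono: "m \<le> n \<Longrightarrow> burned G xs m \<subseteq> burned G xs n"
  by (induction n rule: dec_induct) auto

lemma nbrs_burned_by_round_3:
  assumes "graph G" "adj G v u"
  shows "insert v (insert u (nbrs G u)) \<subseteq> burned G (v # xs) 3"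
proof -
  have "u \<in> burned G (v # xs) 2"
    using assms adj_in_verts[OF assms] by (auto simp: numeral_eq_Suc)
  then show ?thesis
    using adj_in_verts[OF assms(1)] by (auto simp: numeral_eq_Suc nbrs_def)
qed

text \<open>Fire crosses an edge of G' only from round 2 of G' on, i.e. from round 3 of G on; by then
  the endpoints N of the edges missing from G are already burning.\<close>

lemma burned_delayed_simulation:
  assumes "verts G' \<subseteq> verts G"
    and "\<And>z y. adj G' z y \<Longrightarrow> y \<in> verts G' \<Longrightarrow> adj G z y \<or> y \<in> N"
    and "N \<subseteq> burned G (x # xs) 3"
  shows "burned G' xs r \<subseteq> burned G (x # xs) (Suc r)"
proof (induction r)
  case (Suc r)
  show ?case
  proof
    fix y assume y: "y \<in> burned G' xs (Suc r)"
    show "y \<in> burned G (x # xs) (Suc (Suc r))"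
    proof (cases "y \<in> burned G' xs r \<or> y = xs ! r")
      case True
      with Suc.IH show ?thesis by auto
    next
      case False
      then obtain z where z: "z \<in> burned G' xs r" "adj G' z y" "y \<in> verts G'"
        using y by auto
      then have "r \<noteq> 0" by (cases r) auto
      from assms(2)[OF z(2,3)] show ?thesis
      proof
        assume "adj G z y"
        with z(1,3) Suc.IH assms(1) show ?thesis by auto
      next
        assume "y \<in> N"
        moreover have "burned G (x # xs) 3 \<subseteq> burned G (x # xs) (Suc (Suc r))"
          using \<open>r \<noteq> 0\<close> by (intro burned_mono) simp
        ultimately show ?thesis using assms(3) by blast
      qed
    qed
  qed
qed simp

lemma burned_prepend_nbr_covers:
  assumes "graph G" "adj G v u"
    and "verts G' \<subseteq> verts G" "verts G \<subseteq> verts G' \<union> {v, u} \<union> nbrs G u"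
    and "\<And>z y. adj G' z y \<Longrightarrow> adj G z y \<or> y \<in> nbrs G u"
    and "burning_seq G' xs" "2 \<le> length xs"
  shows "verts G \<subseteq> burned G (v # xs) (length (v # xs))"
proof -
  have lit_by_3: "insert v (insert u (nbrs G u)) \<subseteq> burned G (v # xs) 3"
    using nbrs_burned_by_round_3[OF assms(1,2)] .
  have "burned G' xs (length xs) \<subseteq> burned G (v # xs) (Suc (length xs))"
  proof (rule burned_delayed_simulation[OF assms(3)])
    show "adj G z y \<or> y \<in> nbrs G u" if "adj G' z y" for z y
      using assms(5) that .
    show "nbrs G u \<subseteq> burned G (v # xs) 3"
      using lit_by_3 by blast
  qed
  with assms(6) have "verts G' \<subseteq> burned G (v # xs) (length (v # xs))"
    by (simp add: burning_seq_burns_all)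
  moreover have "burned G (v # xs) 3 \<subseteq> burned G (v # xs) (length (v # xs))"
    using assms(7) by (intro burned_mono) simp
  ultimately show ?thesis
    using assms(4) lit_by_3 by blast
qed

theorem mainTheorem8:
  fixes T T' :: "'a graph" and u v :: 'a
  assumes "tree T"
    and "u \<in> verts T"
    and "degree T u \<ge> 3"
    and "leaf T v"
    and "adj T u v"
    and "smoothing (del_vert T v) u T'"
  shows "burning_number T \<le> burning_number T' + 1 \<and>
         (\<exists>xs. burning_seq T xs \<and> length xs \<le> burning_number T' + 1 \<and>
               xs \<noteq> [] \<and> hd xs = v)"
proof -
  have graphT: "graph T" using assms(1) unfolding tree_def by blast
  note T' = smoothing_del_vert[OF graphT assms(6)]
  have "finite (verts T')"
    using finite_subset[OF T'(1)] graphT unfolding graph_def by blast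
  then obtain xs where xs: "burning_seq T' xs" "length xs = burning_number T'"
    by (rule burning_number_attained)
  obtain a b where "a \<in> verts T'" "b \<in> verts T'" "a \<noteq> b"
    using T'(4) by blast
  then have "2 \<le> length xs"
    by (rule burning_seq_length_ge_2[OF xs(1)])
  have "adj T v u" using assms(5) adj_sym[of T u v] by blast
  from burned_prepend_nbr_covers[OF graphT this T'(1,2) T'(3) xs(1) \<open>2 \<le> length xs\<close>]
  have "verts T \<subseteq> burned T (v # xs) (length (v # xs))" .
  moreover have "set (v # xs) \<subseteq> verts T"
    using burning_seq_in_verts[OF xs(1)] T'(1) assms(4) unfolding leaf_def by auto
  ultimately obtain ys where "burning_seq T ys" "length ys \<le> length (v # xs)" "ys \<noteq> []" "hd ys = v"
    using burning_seq_of_cover[of "v # xs" T] by auto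
  with xs(2) show ?thesis using burning_number_le by fastforce
qed

end
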